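(* Let $\rho\in\mathcal{L}_{0}$ be positive, let $\delta\in(0,\alpha]$ and let $\{w_{j}\}$ be a $(\rho,\delta)$-lattice on $\mathbb{D}$. For any $\xi\in\mathbb{D}$ and $k\in\mathbb{N}^{+}$, the set $$D_{k}(\xi)=\{z\in\mathbb{D}:|\xi-z|<2^{k}\delta\min(\rho(\xi),\rho(z))\}$$ contains at most $K$ points of the lattice $\{w_{j}\}$, where $K$ depends on $k$ but not on $\xi$.
   Context: $\mathbb{D}$ is the open unit disc. $C_0$ is the set of continuous $\rho$ on $\mathbb{D}$ with $\rho(z)\to0$ as $|z|\to1$. $\mathcal{L}$ is the set of real $\rho\in C_0$ with $\sup_{z\ne w}|\rho(z)-\rho(w)|/|z-w|<\infty$; $\mathcal{L}_0$ is the set of $\rho\in\mathcal{L}$ such that for every $\varepsilon>0$ there is a compact $E\subset\mathbb{D}$ with $|\rho(z)-\rho(w)|\le\varepsilon|z-w|$ for $z,w\in\mathbb{D}\setminus E$. $D^r(z)=D(z,r\rho(z))$ (Euclidean disc). There are constants $\alpha>0$, $s>0$ depending only on $\rho$ (with $\alpha$ fixed) such that for $0<r\le\alpha$ a $(\rho,r)$-lattice exists, where a $(\rho,r)$-lattice is a sequence $\{w_k\}\subset\mathbb{D}$ with $\mathbb{D}=\bigcup_kD^r(w_k)$, the discs $D^{sr}(w_k)$ pairwise disjoint, and $\{D^{2\alpha}(w_k)\}$ a covering of $\mathbb{D}$ of finite multiplicity. *)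

theory Defs
  imports "HOL-Analysis.Analysis"
begin

definition unit_disc :: "complex set" where
  "unit_disc = ball 0 1"

definition C0_disc :: "(complex \<Rightarrow> real) \<Rightarrow> bool" where
  "C0_disc \<rho> \<longleftrightarrow> continuous_on unit_disc \<rho> \<and>
     (\<forall>\<epsilon>>0. \<exists>r<1. \<forall>z\<in>unit_disc. r < norm z \<longrightarrow> \<bar>\<rho> z\<bar> < \<epsilon>)"

definition L_class :: "(complex \<Rightarrow> real) \<Rightarrow> bool" where
  "L_class \<rho> \<longleftrightarrow> C0_disc \<rho> \<and>
     (\<exists>L. \<forall>z\<in>unit_disc. \<forall>w\<in>unit_disc. \<bar>\<rho> z - \<rho> w\<bar> \<le> L * norm (z - w))"

definition L0_class :: "(complex \<Rightarrow> real) \<Rightarrow> bool" where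
  "L0_class \<rho> \<longleftrightarrow> L_class \<rho> \<and>
     (\<forall>\<epsilon>>0. \<exists>E. compact E \<and> E \<subseteq> unit_disc \<and>
        (\<forall>z\<in>unit_disc - E. \<forall>w\<in>unit_disc - E. \<bar>\<rho> z - \<rho> w\<bar> \<le> \<epsilon> * norm (z - w)))"

definition rdisc :: "(complex \<Rightarrow> real) \<Rightarrow> real \<Rightarrow> complex \<Rightarrow> complex set" where
  "rdisc \<rho> r z = ball z (r * \<rho> z)"

text \<open>A (rho,r)-lattice, relative to the fixed constants alpha and s.\<close>
definition is_lattice ::
  "real \<Rightarrow> real \<Rightarrow> (complex \<Rightarrow> real) \<Rightarrow> real \<Rightarrow> (nat \<Rightarrow> complex) \<Rightarrow> bool" where
  "is_lattice \<alpha> s \<rho> r w \<longleftrightarrow>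
     (\<forall>j. w j \<in> unit_disc) \<and>
     unit_disc = (\<Union>j. rdisc \<rho> r (w j)) \<and>
     (\<forall>i j. i \<noteq> j \<longrightarrow> rdisc \<rho> (s * r) (w i) \<inter> rdisc \<rho> (s * r) (w j) = {}) \<and>
     unit_disc \<subseteq> (\<Union>j. rdisc \<rho> (2 * \<alpha>) (w j)) \<and>
     (\<exists>N::nat. \<forall>z\<in>unit_disc. finite {j. z \<in> rdisc \<rho> (2 * \<alpha>) (w j)} \<and>
                               card {j. z \<in> rdisc \<rho> (2 * \<alpha>) (w j)} \<le> N)"

definition Dk :: "(complex \<Rightarrow> real) \<Rightarrow> real \<Rightarrow> nat \<Rightarrow> complex \<Rightarrow> complex set" where
  "Dk \<rho> \<delta> k \<xi> = {z \<in> unit_disc. norm (\<xi> - z) < 2 ^ k * \<delta> * min (\<rho> \<xi>) (\<rho> z)}"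

end

theory Submission
  imports Defs
begin

text \<open>A lattice point in \<open>D_k(\<xi>)\<close> lies within \<open>2^k \<delta> \<rho>(\<xi>)\<close> of \<open>\<xi>\<close>, and the Lipschitz
  bound makes \<open>\<rho>\<close> at that point at least \<open>\<rho>(\<xi>) / c\<close> with \<open>c = 1 + L 2^k \<delta>\<close>.  Since the
  discs \<open>D^(s\<delta>)(w_j)\<close> are disjoint, these points are pairwise at least \<open>s \<delta> \<rho>(\<xi>) / c\<close> apart.
  The ratio of the radius to the separation is \<open>2^k c / s\<close>, independent of \<open>\<xi>\<close>, so a
  packing count in the plane bounds their number uniformly.\<close>

lemma abs_diff_less_if_floor_divide_eq:
  fixes a b h :: real
  assumes "h > 0" and "\<lfloor>a / h\<rfloor> = \<lfloor>b / h\<rfloor>"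
  shows "\<bar>a - b\<bar> < h"
proof -
  have "\<bar>a / h - b / h\<bar> < 1"
    using assms(2) floor_correct[of "a / h"] floor_correct[of "b / h"] by linarith
  then show ?thesis
    using assms(1) by (simp add: diff_divide_distrib[symmetric] abs_divide)
qed

lemma floor_divide_in_range:
  fixes x h T :: real
  assumes "h > 0" and "\<bar>x\<bar> < T * h"
  shows "\<lfloor>x / h\<rfloor> \<in> {-\<lceil>T\<rceil>..\<lceil>T\<rceil>}"
proof -
  have "\<bar>x\<bar> / h < T"
    using assms by (simp add: pos_divide_less_eq)
  then have "\<bar>x / h\<bar> < T"
    using assms(1) by (simp add: abs_divide)
  then have "\<lfloor>x / h\<rfloor> \<le> \<lceil>T\<rceil>" "-\<lceil>T\<rceil> \<le> \<lfloor>x / h\<rfloor>"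
    using floor_correct[of "x / h"] ceiling_correct[of T] by linarith+
  then show ?thesis by simp
qed

text \<open>Cells of side \<open>d / 2\<close> around \<open>c\<close> contain at most one point each.\<close>

lemma card_separated_in_ball_le:
  fixes p :: "'i \<Rightarrow> complex" and c :: complex and d T :: real
  assumes "d > 0"
    and in_ball: "\<forall>i\<in>S. norm (p i - c) < T * d"
    and separated: "\<forall>i\<in>S. \<forall>j\<in>S. i \<noteq> j \<longrightarrow> d \<le> norm (p i - p j)"
  shows "finite S \<and> card S \<le> nat (2 * \<lceil>2 * T\<rceil> + 1) ^ 2"
proof -
  define h where "h = d / 2"
  have "h > 0" using assms(1) unfolding h_def by simp
  define M where "M = \<lceil>2 * T\<rceil>"
  define cell where "cell i = (\<lfloor>Re (p i - c) / h\<rfloor>, \<lfloor>Im (p i - c) / h\<rfloor>)" for i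
  have cells_bounded: "cell ` S \<subseteq> {-M..M} \<times> {-M..M}"
  proof
    fix q assume "q \<in> cell ` S"
    then obtain i where "i \<in> S" and q: "q = cell i" by blast
    then have "norm (p i - c) < (2 * T) * h"
      using in_ball unfolding h_def by simp
    then have "\<bar>Re (p i - c)\<bar> < (2 * T) * h" "\<bar>Im (p i - c)\<bar> < (2 * T) * h"
      using abs_Re_le_cmod[of "p i - c"] abs_Im_le_cmod[of "p i - c"] by linarith+
    then show "q \<in> {-M..M} \<times> {-M..M}"
      unfolding q cell_def M_def using floor_divide_in_range[OF \<open>h > 0\<close>] by simp
  qed
  have "inj_on cell S"
  proof (rule inj_onI, rule ccontr)
    fix i j assume "i \<in> S" "j \<in> S" "cell i = cell j" "i \<noteq> j"
    then have "\<lfloor>Re (p i - c) / h\<rfloor> = \<lfloor>Re (p j - c) / h\<rfloor>"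
      "\<lfloor>Im (p i - c) / h\<rfloor> = \<lfloor>Im (p j - c) / h\<rfloor>"
      unfolding cell_def by simp_all
    then have "\<bar>Re (p i - c) - Re (p j - c)\<bar> < h" "\<bar>Im (p i - c) - Im (p j - c)\<bar> < h"
      using abs_diff_less_if_floor_divide_eq[OF \<open>h > 0\<close>] by blast+
    then have "norm (p i - p j) < d"
      using cmod_le[of "p i - p j"] unfolding h_def by simp
    with separated \<open>i \<in> S\<close> \<open>j \<in> S\<close> \<open>i \<noteq> j\<close> show False by fastforce
  qed
  have finite_grid: "finite ({-M..M} \<times> {-M..M})" by simp
  have "finite S"
    using finite_imageD[OF finite_subset[OF cells_bounded finite_grid] \<open>inj_on cell S\<close>] .
  moreover have "card S \<le> card ({-M..M} \<times> {-M..M})"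
    using card_inj_on_le[OF \<open>inj_on cell S\<close> cells_bounded finite_grid] .
  ultimately show ?thesis
    unfolding M_def by (simp add: card_cartesian_product power2_eq_square)
qed

lemma L_class_lipschitz:
  assumes "L_class \<rho>"
  obtains L where "L \<ge> 0"
    and "\<And>z v. z \<in> unit_disc \<Longrightarrow> v \<in> unit_disc \<Longrightarrow> \<bar>\<rho> z - \<rho> v\<bar> \<le> L * norm (z - v)"
proof -
  from assms obtain L0 where
    L0: "\<forall>z\<in>unit_disc. \<forall>v\<in>unit_disc. \<bar>\<rho> z - \<rho> v\<bar> \<le> L0 * norm (z - v)"
    unfolding L_class_def by blast
  have "L0 * norm (z - v) \<le> max L0 0 * norm (z - v)" for z v :: complex
    by (intro mult_right_mono) auto
  with L0 have "\<bar>\<rho> z - \<rho> v\<bar> \<le> max L0 0 * norm (z - v)"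
    if "z \<in> unit_disc" "v \<in> unit_disc" for z v
    using that by (meson order_trans)
  then show ?thesis using that[of "max L0 0"] by simp
qed

lemma lipschitz_weight_le_at_nearby_point:
  fixes \<rho> :: "'a::real_normed_vector \<Rightarrow> real"
  assumes "L \<ge> 0" and "\<bar>\<rho> \<xi> - \<rho> z\<bar> \<le> L * norm (\<xi> - z)"
    and "norm (\<xi> - z) < r * \<rho> z"
  shows "\<rho> \<xi> \<le> (1 + L * r) * \<rho> z"
proof -
  have "\<rho> \<xi> - \<rho> z \<le> L * norm (\<xi> - z)" using assms(2) by linarith
  also have "\<dots> \<le> L * (r * \<rho> z)" using assms(1,3) by (intro mult_left_mono) auto
  finally show ?thesis by (simp add: algebra_simps)
qed

lemma Dk_dist_less:
  assumes "z \<in> Dk \<rho> \<delta> k \<xi>" and "\<delta> > 0"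
  shows "norm (\<xi> - z) < 2 ^ k * \<delta> * \<rho> \<xi>" and "norm (\<xi> - z) < 2 ^ k * \<delta> * \<rho> z"
proof -
  have "0 \<le> 2 ^ k * \<delta>" using assms(2) by simp
  have "norm (\<xi> - z) < 2 ^ k * \<delta> * min (\<rho> \<xi>) (\<rho> z)"
    using assms(1) unfolding Dk_def by simp
  also have "\<dots> \<le> 2 ^ k * \<delta> * \<rho> \<xi>"
    by (rule mult_left_mono[OF min.cobounded1 \<open>0 \<le> 2 ^ k * \<delta>\<close>])
  finally show "norm (\<xi> - z) < 2 ^ k * \<delta> * \<rho> \<xi>" .
  have "2 ^ k * \<delta> * min (\<rho> \<xi>) (\<rho> z) \<le> 2 ^ k * \<delta> * \<rho> z"
    by (rule mult_left_mono[OF min.cobounded2 \<open>0 \<le> 2 ^ k * \<delta>\<close>])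
  with \<open>norm (\<xi> - z) < 2 ^ k * \<delta> * min (\<rho> \<xi>) (\<rho> z)\<close>
  show "norm (\<xi> - z) < 2 ^ k * \<delta> * \<rho> z" by linarith
qed

lemma lattice_separated:
  assumes "is_lattice \<alpha> s \<rho> r w" and "s > 0" "r > 0" and "\<forall>z\<in>unit_disc. \<rho> z > 0"
    and "i \<noteq> j"
  shows "s * r * \<rho> (w i) \<le> norm (w i - w j)"
proof -
  have "w j \<in> unit_disc" using assms(1) unfolding is_lattice_def by blast
  with assms(2-4) have "w j \<in> rdisc \<rho> (s * r) (w j)" unfolding rdisc_def by simp
  moreover have "rdisc \<rho> (s * r) (w i) \<inter> rdisc \<rho> (s * r) (w j) = {}"
    using assms(1,5) unfolding is_lattice_def by blast
  ultimately have "w j \<notin> rdisc \<rho> (s * r) (w i)" by blast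
  then show ?thesis unfolding rdisc_def by (simp add: dist_norm)
qed

lemma lattice_points_in_Dk_separated:
  assumes lattice: "is_lattice \<alpha> s \<rho> \<delta> w" and "s > 0" "\<delta> > 0"
    and pos: "\<forall>z\<in>unit_disc. \<rho> z > 0"
    and "L \<ge> 0" and lip: "\<And>z v. z \<in> unit_disc \<Longrightarrow> v \<in> unit_disc \<Longrightarrow> \<bar>\<rho> z - \<rho> v\<bar> \<le> L * norm (z - v)"
    and "\<xi> \<in> unit_disc" and "w i \<in> Dk \<rho> \<delta> k \<xi>" and "i \<noteq> j"
  shows "s * \<delta> * \<rho> \<xi> / (1 + L * 2 ^ k * \<delta>) \<le> norm (w i - w j)"
proof -
  define c where "c = 1 + L * 2 ^ k * \<delta>"
  have "c > 0" unfolding c_def using \<open>L \<ge> 0\<close> \<open>\<delta> > 0\<close> by (simp add: add_pos_nonneg)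
  have "w i \<in> unit_disc" using lattice unfolding is_lattice_def by blast
  have "norm (\<xi> - w i) < (2 ^ k * \<delta>) * \<rho> (w i)"
    using Dk_dist_less(2)[OF \<open>w i \<in> Dk \<rho> \<delta> k \<xi>\<close> \<open>\<delta> > 0\<close>] by simp
  then have "\<rho> \<xi> \<le> (1 + L * (2 ^ k * \<delta>)) * \<rho> (w i)"
    by (rule lipschitz_weight_le_at_nearby_point[OF \<open>L \<ge> 0\<close> lip[OF \<open>\<xi> \<in> unit_disc\<close> \<open>w i \<in> unit_disc\<close>]])
  then have "\<rho> \<xi> \<le> c * \<rho> (w i)"
    unfolding c_def by (simp add: mult.assoc)
  then have "s * \<delta> * \<rho> \<xi> / c \<le> s * \<delta> * \<rho> (w i)"
    using \<open>c > 0\<close> \<open>s > 0\<close> \<open>\<delta> > 0\<close> by (simp add: divide_le_eq mult.commute)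
  also have "\<dots> \<le> norm (w i - w j)"
    using lattice_separated[OF lattice \<open>s > 0\<close> \<open>\<delta> > 0\<close> pos \<open>i \<noteq> j\<close>] .
  finally show ?thesis unfolding c_def .
qed

theorem lemma5p5:
  fixes \<rho> :: "complex \<Rightarrow> real" and \<alpha> s \<delta> :: real and w :: "nat \<Rightarrow> complex" and k :: nat
  assumes "\<alpha> > 0" and "s > 0"
    and "L0_class \<rho>" and "\<forall>z\<in>unit_disc. \<rho> z > 0"
    and "0 < \<delta>" and "\<delta> \<le> \<alpha>"
    and "is_lattice \<alpha> s \<rho> \<delta> w"
    and "k \<ge> 1"
  shows "\<exists>K::nat. \<forall>\<xi>\<in>unit_disc.
           finite {j. w j \<in> Dk \<rho> \<delta> k \<xi>} \<and> card {j. w j \<in> Dk \<rho> \<delta> k \<xi>} \<le> K"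
proof -
  obtain L where "L \<ge> 0" and lip:
    "\<And>z v. z \<in> unit_disc \<Longrightarrow> v \<in> unit_disc \<Longrightarrow> \<bar>\<rho> z - \<rho> v\<bar> \<le> L * norm (z - v)"
    using assms(3) L_class_lipschitz unfolding L0_class_def by blast
  define c where "c = 1 + L * 2 ^ k * \<delta>"
  have "c > 0" unfolding c_def using \<open>L \<ge> 0\<close> assms(5) by (simp add: add_pos_nonneg)
  define T where "T = 2 ^ k * c / s"
  show ?thesis
  proof (intro exI ballI)
    fix \<xi> assume "\<xi> \<in> unit_disc"
    define d where "d = s * \<delta> * \<rho> \<xi> / c"
    have "d > 0" unfolding d_def using assms(2,4,5) \<open>\<xi> \<in> unit_disc\<close> \<open>c > 0\<close> by simp
    have "T * d = 2 ^ k * \<delta> * \<rho> \<xi>"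
      unfolding T_def d_def using \<open>c > 0\<close> assms(2) by (simp add: field_simps)
    then have "\<forall>j\<in>{j. w j \<in> Dk \<rho> \<delta> k \<xi>}. norm (w j - \<xi>) < T * d"
      using Dk_dist_less(1)[OF _ assms(5)] by (metis mem_Collect_eq norm_minus_commute)
    moreover have "\<forall>i\<in>{j. w j \<in> Dk \<rho> \<delta> k \<xi>}. \<forall>j\<in>{j. w j \<in> Dk \<rho> \<delta> k \<xi>}.
        i \<noteq> j \<longrightarrow> d \<le> norm (w i - w j)"
      unfolding d_def c_def
      using lattice_points_in_Dk_separated[OF assms(7,2,5,4) \<open>L \<ge> 0\<close> lip \<open>\<xi> \<in> unit_disc\<close>] by blast
    ultimately show "finite {j. w j \<in> Dk \<rho> \<delta> k \<xi>} \<and>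
        card {j. w j \<in> Dk \<rho> \<delta> k \<xi>} \<le> nat (2 * \<lceil>2 * T\<rceil> + 1) ^ 2"
      using card_separated_in_ball_le[OF \<open>d > 0\<close>] by blast
  qed
qed

end
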